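(* Let $\mathds J=[0,\infty)$, $n\ge2$, $1\le k\le n-1$, and consider \[ \begin{bmatrix}\dot x_1(t)\\ \dot x_2(t)\end{bmatrix}=\begin{bmatrix}B_{11}(t) & B_{12}(t)\\ 0 & B_{22}(t)\end{bmatrix}\begin{bmatrix}x_1(t)\\ x_2(t)\end{bmatrix}, \] where $B_{11}(t)$, $B_{12}(t)$, $B_{22}(t)$ are continuous, uniformly bounded matrix functions on $\mathds J$ of dimensions $(n-k)\times(n-k)$, $(n-k)\times k$, $k\times k$. Assume that $\dot x_1(t)=B_{11}(t)x_1(t)$ has an exponential dichotomy on $\mathds J$ with projection $P_1=0$, and $\dot x_2(t)=B_{22}(t)x_2(t)$ has an exponential dichotomy on $\mathds J$ with projection $P_2=I_k$. Then the full system $\dot x(t)=B(t)x(t)$ has an exponential dichotomy on $\mathds J$ with projection $P=\begin{bmatrix}0&0\\0&I_k\end{bmatrix}$. Moreover, it is reducible to block diagonal form with dimension $k$ in such a way that the resulting block diagonal coefficient matrix $D(t)=\mathrm{diag}(D_1(t),D_2(t))$ ($D_2(t)$ of size $k\times k$) satisfies $D_1(t)=B_{11}(t)$.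
   Context: Exponential dichotomy of $\dot x=A(t)x$ on $\mathds J$ with projection $P$ ($P^2=P$): there exist $K\ge1$, $\alpha>0$ and a nonsingular fundamental matrix solution $X(t)$ of $\dot X=AX$ with $\|X(t)PX^{-1}(t_0)\|\le Ke^{-\alpha(t-t_0)}$ for $t\ge t_0\ge0$ and $\|X(t)(I-P)X^{-1}(t_0)\|\le Ke^{\alpha(t-t_0)}$ for $0\le t\le t_0$. A Lyapunov transformation is a smooth invertible change of coordinates $x(t)=S(t)z(t)$ with $S(t)$, $S^{-1}(t)$ and $\dot S(t)$ uniformly bounded on $\mathds J$; it transforms $\dot x=A(t)x$ into $\dot z=[S^{-1}(t)A(t)S(t)-S^{-1}(t)\dot S(t)]z$. The system $\dot x=A(t)x$ is reducible to block diagonal form with dimension $k$ if there is a Lyapunov transformation $x=S(t)z$ transforming it into $\dot z=D(t)z$ with $D(t)=\begin{bmatrix}D_1(t)&0\\0&D_2(t)\end{bmatrix}$, $D_2(t)$ a $k\times k$ matrix. *)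

theory Defs
  imports "HOL-Analysis.Analysis"
begin

text \<open>Time interval J = [0,infinity) is {0..}. Square matrices of dimension m are
  real^'n^'n with CARD('n) = m.\<close>

definition exp_dichotomy :: "(real \<Rightarrow> real^'n^'n) \<Rightarrow> real^'n^'n \<Rightarrow> bool" where
  "exp_dichotomy A P \<longleftrightarrow> P ** P = P \<and>
     (\<exists>K \<alpha> X. K \<ge> 1 \<and> \<alpha> > 0 \<and>
        (\<forall>t\<ge>0. (X has_vector_derivative (A t ** X t)) (at t within {0..}) \<and> invertible (X t)) \<and>
        (\<forall>t t0. 0 \<le> t0 \<and> t0 \<le> t \<longrightarrow>
            norm (X t ** P ** matrix_inv (X t0)) \<le> K * exp (- \<alpha> * (t - t0))) \<and>
        (\<forall>t t0. 0 \<le> t \<and> t \<le> t0 \<longrightarrow>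
            norm (X t ** (mat 1 - P) ** matrix_inv (X t0)) \<le> K * exp (\<alpha> * (t - t0))))"

definition lyapunov_transformation :: "(real \<Rightarrow> real^'n^'n) \<Rightarrow> (real \<Rightarrow> real^'n^'n) \<Rightarrow> bool" where
  "lyapunov_transformation S S' \<longleftrightarrow>
     (\<forall>t\<ge>0. (S has_vector_derivative S' t) (at t within {0..}) \<and> invertible (S t)) \<and>
     continuous_on {0..} S' \<and>
     bounded (S ` {0..}) \<and> bounded ((\<lambda>t. matrix_inv (S t)) ` {0..}) \<and> bounded (S' ` {0..})"

definition transformed_coeff ::
  "(real \<Rightarrow> real^'n^'n) \<Rightarrow> (real \<Rightarrow> real^'n^'n) \<Rightarrow> (real \<Rightarrow> real^'n^'n) \<Rightarrow> real \<Rightarrow> real^'n^'n" where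
  "transformed_coeff A S S' t = matrix_inv (S t) ** A t ** S t - matrix_inv (S t) ** S' t"

definition block_mat :: "real^'a^'a \<Rightarrow> real^'b^'a \<Rightarrow> real^'b^'b \<Rightarrow> real^('a + 'b)^('a + 'b)" where
  "block_mat M11 M12 M22 = (\<chi> i j. case i of
       Inl p \<Rightarrow> (case j of Inl q \<Rightarrow> M11 $ p $ q | Inr q \<Rightarrow> M12 $ p $ q)
     | Inr p \<Rightarrow> (case j of Inl q \<Rightarrow> 0 | Inr q \<Rightarrow> M22 $ p $ q))"

end

theory Submission
  imports Defs
begin

text \<open>
  With S(t) = [I H(t); 0 I], the substitution x = S z turns the triangular system into the block
  diagonal system diag(B11, B22) exactly when H solves the Sylvester differential equation
  H' = B11 H - H B22 + B12. Since the first block is purely unstable (P1 = 0) and the second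
  purely stable (P2 = I), this equation has the bounded solution
  H(t) = - X1(t) (integral from t to infinity of X1(s)^-1 B12(s) X2(s) ds) X2(t)^-1,
  whose integrand, conjugated by X1(t) and X2(t)^-1, decays like exp(-(alpha1 + alpha2)(s - t)).
  So S is a Lyapunov transformation. The block diagonal system has an exponential dichotomy
  with projection diag(0, I), with fundamental matrix diag(X1, X2), and S diag(X1, X2) is a
  fundamental matrix of the original system whose dichotomy estimates only change by the
  factor sup |S| sup |S^-1|.
\<close>

section \<open>Products and inverses of matrices\<close>

lemma power2_norm_matrix:
  fixes M :: "real^'n^'m"
  shows "(norm M)\<^sup>2 = (\<Sum>i\<in>UNIV. \<Sum>j\<in>UNIV. (M $ i $ j)\<^sup>2)"
  unfolding power2_norm_eq_inner by (simp add: inner_vec_def power2_eq_square)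

lemma norm_matrix_mult_le:
  fixes A :: "real^'n^'m" and B :: "real^'k^'n"
  shows "norm (A ** B) \<le> norm A * norm B"
proof -
  have rows: "(norm M)\<^sup>2 = (\<Sum>i\<in>UNIV. (norm (M $ i))\<^sup>2)" for M :: "real^'q^'p"
    by (simp add: power2_norm_eq_inner inner_vec_def)
  have columns: "(norm M)\<^sup>2 = (\<Sum>j\<in>UNIV. (norm (column j M))\<^sup>2)" for M :: "real^'q^'p"
    unfolding power2_norm_matrix power2_norm_eq_inner
    by (subst sum.swap) (simp add: inner_vec_def power2_eq_square column_def)
  have entry: "(A ** B) $ i $ j = A $ i \<bullet> column j B" for i j
    by (simp add: matrix_matrix_mult_def inner_vec_def column_def)
  have "(norm (A ** B))\<^sup>2 = (\<Sum>i\<in>UNIV. \<Sum>j\<in>UNIV. (A $ i \<bullet> column j B)\<^sup>2)"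
    unfolding power2_norm_matrix entry ..
  also have "\<dots> \<le> (\<Sum>i\<in>UNIV. \<Sum>j\<in>UNIV. (norm (A $ i))\<^sup>2 * (norm (column j B))\<^sup>2)"
    by (intro sum_mono) (metis Cauchy_Schwarz_ineq power2_norm_eq_inner)
  also have "\<dots> = (norm A * norm B)\<^sup>2"
    by (simp add: rows[of A] columns[of B] sum_product power_mult_distrib)
  finally show ?thesis
    by (rule power2_le_imp_le) simp
qed

lemma norm_matrix_mult3_le:
  fixes A :: "real^'n^'m" and B :: "real^'k^'n" and C :: "real^'l^'k"
  shows "norm (A ** B ** C) \<le> norm A * norm B * norm C"
  by (meson norm_matrix_mult_le mult_right_mono norm_ge_zero order_trans)

lemma bounded_bilinear_matrix_mult:
  "bounded_bilinear ((**) :: real^'n^'m \<Rightarrow> real^'k^'n \<Rightarrow> real^'k^'m)"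
proof
  fix A A' :: "real^'n^'m" and B B' :: "real^'k^'n" and r :: real
  show "(A + A') ** B = A ** B + A' ** B"
    by (vector matrix_matrix_mult_def sum.distrib[symmetric] field_simps)
  show "A ** (B + B') = A ** B + A ** B'"
    by (rule matrix_add_ldistrib)
  show "(r *\<^sub>R A) ** B = r *\<^sub>R (A ** B)"
    by (simp add: scalar_matrix_assoc)
  show "A ** (r *\<^sub>R B) = r *\<^sub>R (A ** B)"
    by (simp add: matrix_scalar_ac scalar_matrix_assoc)
  show "\<exists>K. \<forall>A B. norm (A ** B :: real^'k^'m) \<le> norm (A :: real^'n^'m) * norm (B :: real^'k^'n) * K"
    by (rule exI[of _ 1]) (simp add: norm_matrix_mult_le)
qed

lemmas matrix_mult_add_left = bounded_bilinear.add_left[OF bounded_bilinear_matrix_mult]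
lemmas matrix_mult_add_right = bounded_bilinear.add_right[OF bounded_bilinear_matrix_mult]
lemmas matrix_mult_diff_left = bounded_bilinear.diff_left[OF bounded_bilinear_matrix_mult]
lemmas matrix_mult_diff_right = bounded_bilinear.diff_right[OF bounded_bilinear_matrix_mult]
lemmas matrix_mult_minus_left = bounded_bilinear.minus_left[OF bounded_bilinear_matrix_mult]
lemmas matrix_mult_minus_right = bounded_bilinear.minus_right[OF bounded_bilinear_matrix_mult]
lemmas matrix_mult_distribs = matrix_mult_add_left matrix_mult_add_right
  matrix_mult_diff_left matrix_mult_diff_right matrix_mult_minus_left matrix_mult_minus_right
lemmas tendsto_matrix_mult = bounded_bilinear.tendsto[OF bounded_bilinear_matrix_mult]
lemmas continuous_on_matrix_mult = bounded_bilinear.continuous_on[OF bounded_bilinear_matrix_mult]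
lemmas has_vector_derivative_matrix_mult =
  bounded_bilinear.has_vector_derivative[OF bounded_bilinear_matrix_mult]

lemma bounded_matrix_mult_comp:
  fixes f :: "'x \<Rightarrow> real^'n^'m" and g :: "'x \<Rightarrow> real^'k^'n"
  assumes "bounded (f ` S)" and "bounded (g ` S)"
  shows "bounded ((\<lambda>x. f x ** g x) ` S)"
proof -
  obtain a b where "\<And>x. x \<in> S \<Longrightarrow> norm (f x) \<le> a" "\<And>x. x \<in> S \<Longrightarrow> norm (g x) \<le> b"
    using assms unfolding bounded_iff by auto
  then have "norm (f x ** g x) \<le> a * b" if "x \<in> S" for x
    using that by (intro order_trans[OF norm_matrix_mult_le] mult_mono) (auto intro: order_trans[OF norm_ge_zero])
  then show ?thesis
    unfolding bounded_iff by blast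
qed

lemma matrix_inv_unique:
  fixes A B :: "'a::field^'n^'n"
  assumes "A ** B = mat 1"
  shows "invertible A" and "matrix_inv A = B"
proof -
  have BA: "B ** A = mat 1"
    using assms matrix_left_right_inverse by blast
  then show "invertible A"
    using assms invertible_def by blast
  have "A ** matrix_inv A = mat 1 \<and> matrix_inv A ** A = mat 1"
    unfolding matrix_inv_def by (rule someI[of _ B]) (simp add: assms BA)
  then show "matrix_inv A = B"
    by (metis BA matrix_mul_assoc matrix_mul_lid matrix_mul_rid)
qed

lemma
  fixes A :: "'a::field^'n^'n"
  assumes "invertible A"
  shows matrix_inv_right: "A ** matrix_inv A = mat 1"
    and matrix_inv_left: "matrix_inv A ** A = mat 1"
proof -
  obtain B where "A ** B = mat 1"
    using assms invertible_right_inverse by blast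
  then show "A ** matrix_inv A = mat 1" "matrix_inv A ** A = mat 1"
    using matrix_inv_unique(2) matrix_left_right_inverse by metis+
qed

lemma matrix_inv_diff:
  fixes A B :: "real^'n^'n"
  assumes "invertible A" "invertible B"
  shows "matrix_inv A - matrix_inv B = - (matrix_inv A ** (A - B) ** matrix_inv B)"
  using assms by (simp add: matrix_mult_distribs matrix_mul_assoc matrix_inv_left)
    (metis matrix_inv_right matrix_mul_assoc matrix_mul_rid)

lemma matrix_inv_mult:
  fixes A B :: "'a::field^'n^'n"
  assumes "invertible A" and "invertible B"
  shows "matrix_inv (A ** B) = matrix_inv B ** matrix_inv A"
proof -
  have "A ** B ** (matrix_inv B ** matrix_inv A) = mat 1"
    using assms by (metis matrix_inv_right matrix_mul_assoc matrix_mul_rid)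
  then show ?thesis
    by (rule matrix_inv_unique)
qed

lemma has_vector_derivative_iff_difference_quotient:
  fixes f :: "real \<Rightarrow> 'a::real_normed_vector"
  shows "(f has_vector_derivative D) (at x within S) \<longleftrightarrow>
    ((\<lambda>y. inverse (y - x) *\<^sub>R (f y - f x)) \<longlongrightarrow> D) (at x within S)"
proof -
  have "\<forall>\<^sub>F y in at x within S. y \<noteq> x"
    by (simp add: eventually_at_filter)
  then have "\<forall>\<^sub>F y in at x within S. norm (f y - f x - (y - x) *\<^sub>R D) / norm (y - x)
      = norm (inverse (y - x) *\<^sub>R (f y - f x) - D)"
  proof eventually_elim
    case (elim y)
    then have "f y - f x - (y - x) *\<^sub>R D = (y - x) *\<^sub>R (inverse (y - x) *\<^sub>R (f y - f x) - D)"
      by (simp add: scaleR_diff_right)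
    with elim show ?case
      by simp
  qed
  then show ?thesis
    unfolding has_vector_derivative_def has_derivative_iff_norm
    by (simp add: bounded_linear_scaleR_left tendsto_cong tendsto_norm_zero_iff LIM_zero_iff)
qed

lemma tendsto_matrix_inv:
  fixes X :: "'a \<Rightarrow> real^'n^'n"
  assumes lim: "(X \<longlongrightarrow> L) F" and "invertible L" and inv: "\<forall>\<^sub>F s in F. invertible (X s)"
  shows "((\<lambda>s. matrix_inv (X s)) \<longlongrightarrow> matrix_inv L) F"
proof -
  define c where "c = norm (matrix_inv L)"
  have "((\<lambda>s. norm (X s - L) * c) \<longlongrightarrow> 0 * c) F"
    using lim by (intro tendsto_intros) (simp add: tendsto_norm_zero_iff LIM_zero_iff)
  then have small: "\<forall>\<^sub>F s in F. norm (X s - L) * c < 1/2"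
    by (rule order_tendstoD) simp
  have "\<forall>\<^sub>F s in F. norm (matrix_inv (X s) - matrix_inv L) \<le> 2 * c * c * norm (X s - L)"
    using inv small
  proof eventually_elim
    case (elim s)
    define e where "e = norm (matrix_inv (X s) - matrix_inv L)"
    define q where "q = norm (X s - L) * c"
    have "e \<le> norm (matrix_inv (X s)) * norm (X s - L) * c"
      unfolding e_def c_def matrix_inv_diff[OF elim(1) \<open>invertible L\<close>] norm_minus_cancel
      by (rule norm_matrix_mult3_le)
    also have "\<dots> \<le> (e + c) * q"
      unfolding q_def e_def c_def mult.assoc
      using norm_triangle_ineq2[of "matrix_inv (X s)" "matrix_inv L"]
      by (intro mult_right_mono) auto
    finally have "e \<le> e * q + c * q"
      by (simp add: distrib_right)
    moreover have "e * q \<le> e * (1/2)"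
      using elim(2) by (intro mult_left_mono) (auto simp: q_def e_def)
    ultimately have "e \<le> 2 * c * q"
      by linarith
    then show ?case
      by (simp add: e_def q_def mult_ac)
  qed
  moreover have "((\<lambda>s. 2 * c * c * norm (X s - L)) \<longlongrightarrow> 0) F"
    using lim by (intro tendsto_mult_right_zero) (simp add: tendsto_norm_zero_iff LIM_zero_iff)
  ultimately show ?thesis
    by (rule Lim_null_comparison[THEN LIM_zero_cancel])
qed

lemma has_vector_derivative_matrix_inv:
  fixes X :: "real \<Rightarrow> real^'n^'n"
  assumes deriv: "(X has_vector_derivative X') (at t within S)"
    and inv: "\<And>s. s \<in> S \<Longrightarrow> invertible (X s)" and "t \<in> S"
  shows "((\<lambda>s. matrix_inv (X s)) has_vector_derivative
           - (matrix_inv (X t) ** X' ** matrix_inv (X t))) (at t within S)"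
proof -
  define Y where "Y s = matrix_inv (X s)" for s
  have in_S: "\<forall>\<^sub>F s in at t within S. s \<in> S"
    by (simp add: eventually_at_filter)
  have "(X \<longlongrightarrow> X t) (at t within S)"
    using has_vector_derivative_continuous[OF deriv] by (simp add: continuous_within)
  then have "(Y \<longlongrightarrow> Y t) (at t within S)"
    unfolding Y_def using in_S inv \<open>t \<in> S\<close>
    by (auto intro!: tendsto_matrix_inv elim: eventually_mono)
  moreover have "((\<lambda>s. inverse (s - t) *\<^sub>R (X s - X t)) \<longlongrightarrow> X') (at t within S)"
    using deriv by (simp add: has_vector_derivative_iff_difference_quotient)
  ultimately have "((\<lambda>s. - (Y s ** (inverse (s - t) *\<^sub>R (X s - X t)) ** Y t))
      \<longlongrightarrow> - (Y t ** X' ** Y t)) (at t within S)"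
    by (intro tendsto_minus tendsto_matrix_mult tendsto_const)
  moreover have "\<forall>\<^sub>F s in at t within S. - (Y s ** (inverse (s - t) *\<^sub>R (X s - X t)) ** Y t)
      = inverse (s - t) *\<^sub>R (Y s - Y t)"
    using in_S
  proof eventually_elim
    case (elim s)
    then show ?case
      unfolding Y_def matrix_inv_diff[OF inv[OF elim] inv[OF \<open>t \<in> S\<close>]]
      by (simp add: matrix_scalar_ac scalar_matrix_assoc)
  qed
  ultimately show ?thesis
    unfolding has_vector_derivative_iff_difference_quotient Y_def by (simp add: tendsto_cong)
qed

section \<open>Block matrices\<close>

lemma sum_UNIV_Plus:
  "(\<Sum>x\<in>(UNIV :: ('a::finite + 'b::finite) set). f x) = (\<Sum>a\<in>UNIV. f (Inl a)) + (\<Sum>b\<in>UNIV. f (Inr b))"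
  by (subst UNIV_Plus_UNIV[symmetric], subst sum.Plus) (simp_all add: comp_def)

lemma block_mat_nth [simp]:
  "block_mat A B C $ Inl p $ Inl q = A $ p $ q"
  "block_mat A B C $ Inl p $ Inr q' = B $ p $ q'"
  "block_mat A B C $ Inr p' $ Inl q = 0"
  "block_mat A B C $ Inr p' $ Inr q' = C $ p' $ q'"
  by (simp_all add: block_mat_def)

lemma block_mat_eq_iff:
  "block_mat A B C = block_mat A' B' C' \<longleftrightarrow> A = A' \<and> B = B' \<and> C = C'"
proof
  assume eq: "block_mat A B C = block_mat A' B' C'"
  have "A $ p $ q = A' $ p $ q" "B $ p $ q' = B' $ p $ q'" "C $ p' $ q' = C' $ p' $ q'" for p q p' q'
    using arg_cong[OF eq, of "\<lambda>M. M $ Inl p $ Inl q"] arg_cong[OF eq, of "\<lambda>M. M $ Inl p $ Inr q'"]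
      arg_cong[OF eq, of "\<lambda>M. M $ Inr p' $ Inr q'"] by simp_all
  then show "A = A' \<and> B = B' \<and> C = C'"
    by (simp add: vec_eq_iff)
qed simp

lemma block_mat_mult [simp]:
  fixes A :: "real^'a::finite^'a" and B :: "real^'b::finite^'a" and C :: "real^'b^'b"
  shows "block_mat A B C ** block_mat A' B' C' = block_mat (A ** A') (A ** B' + B ** C') (C ** C')"
  unfolding vec_eq_iff
proof (intro allI)
  fix i j :: "'a + 'b"
  show "(block_mat A B C ** block_mat A' B' C') $ i $ j
      = block_mat (A ** A') (A ** B' + B ** C') (C ** C') $ i $ j"
    by (cases i; cases j) (simp_all add: matrix_matrix_mult_def sum_UNIV_Plus)
qed

lemma mat_1_eq_block_mat: "(mat 1 :: real^('a::finite + 'b::finite)^('a + 'b)) = block_mat (mat 1) 0 (mat 1)"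
  unfolding vec_eq_iff
proof (intro allI)
  fix i j :: "'a + 'b"
  show "(mat 1 :: real^('a + 'b)^('a + 'b)) $ i $ j = block_mat (mat 1) 0 (mat 1) $ i $ j"
    by (cases i; cases j) (simp_all add: mat_def)
qed

lemma block_mat_add [simp]: "block_mat A B C + block_mat A' B' C' = block_mat (A + A') (B + B') (C + C')"
  and block_mat_diff [simp]: "block_mat A B C - block_mat A' B' C' = block_mat (A - A') (B - B') (C - C')"
  and block_mat_scaleR [simp]: "r *\<^sub>R block_mat A B C = block_mat (r *\<^sub>R A) (r *\<^sub>R B) (r *\<^sub>R C)"
  unfolding vec_eq_iff by (auto simp: block_mat_def split: sum.splits)

lemma
  fixes N :: "real^'b::finite^'a::finite"
  shows invertible_unit_upper_block: "invertible (block_mat (mat 1) N (mat 1))"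
    and matrix_inv_unit_upper_block: "matrix_inv (block_mat (mat 1) N (mat 1)) = block_mat (mat 1) (- N) (mat 1)"
proof -
  have "block_mat (mat 1) N (mat 1) ** block_mat (mat 1) (- N) (mat 1) = mat 1"
    by (simp add: mat_1_eq_block_mat matrix_mult_minus_right)
  then show "invertible (block_mat (mat 1) N (mat 1))"
    and "matrix_inv (block_mat (mat 1) N (mat 1)) = block_mat (mat 1) (- N) (mat 1)"
    by (rule matrix_inv_unique)+
qed

lemma norm_block_mat:
  fixes A :: "real^'a::finite^'a" and B :: "real^'b::finite^'a" and C :: "real^'b^'b"
  shows "norm (block_mat A B C) = norm (A, B, C)"
proof -
  have pair: "(norm (x, y))\<^sup>2 = (norm x)\<^sup>2 + (norm y)\<^sup>2"
    for x :: "'c::real_normed_vector" and y :: "'d::real_normed_vector"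
    by (simp add: norm_Pair)
  have "(norm (block_mat A B C))\<^sup>2 = (norm (A, B, C))\<^sup>2"
    unfolding pair power2_norm_matrix by (simp add: sum_UNIV_Plus sum.distrib)
  then show ?thesis
    by (simp add: power2_eq_iff_nonneg)
qed

lemma norm_block_mat_le:
  fixes A :: "real^'a::finite^'a" and B :: "real^'b::finite^'a" and C :: "real^'b^'b"
  shows "norm (block_mat A B C) \<le> norm A + norm B + norm C"
  unfolding norm_block_mat
  using norm_Pair_le[of A "(B, C)"] norm_Pair_le[of B C] by linarith

lemma bounded_linear_block_mat:
  "bounded_linear (\<lambda>(A :: real^'a::finite^'a, B :: real^'b::finite^'a, C :: real^'b^'b). block_mat A B C)"
  by (rule bounded_linear_intro[of _ 1]) (auto simp: norm_block_mat)

lemma has_vector_derivative_block_mat: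
  fixes A :: "real \<Rightarrow> real^'a::finite^'a" and B :: "real \<Rightarrow> real^'b::finite^'a"
    and C :: "real \<Rightarrow> real^'b^'b"
  assumes "(A has_vector_derivative A') (at t within S)" "(B has_vector_derivative B') (at t within S)"
    and "(C has_vector_derivative C') (at t within S)"
  shows "((\<lambda>t. block_mat (A t) (B t) (C t)) has_vector_derivative block_mat A' B' C') (at t within S)"
  using bounded_linear.has_vector_derivative[OF bounded_linear_block_mat
      has_vector_derivative_Pair[OF assms(1) has_vector_derivative_Pair[OF assms(2,3)]]]
  by simp

lemma continuous_on_block_mat:
  fixes A :: "real \<Rightarrow> real^'a::finite^'a" and B :: "real \<Rightarrow> real^'b::finite^'a"
    and C :: "real \<Rightarrow> real^'b^'b"
  assumes "continuous_on S A" "continuous_on S B" "continuous_on S C"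
  shows "continuous_on S (\<lambda>t. block_mat (A t) (B t) (C t))"
  using continuous_on_compose[OF continuous_on_Pair[OF assms(1) continuous_on_Pair[OF assms(2,3)]]
      linear_continuous_on[OF bounded_linear_block_mat]]
  by (simp add: comp_def)

section \<open>Fundamental matrices and exponential dichotomies\<close>

definition fundamental_matrix :: "(real \<Rightarrow> real^'n^'n) \<Rightarrow> (real \<Rightarrow> real^'n^'n) \<Rightarrow> bool" where
  "fundamental_matrix A X \<longleftrightarrow>
     (\<forall>t\<ge>0. (X has_vector_derivative A t ** X t) (at t within {0..}) \<and> invertible (X t))"

lemma exp_dichotomy_iff:
  "exp_dichotomy A P \<longleftrightarrow> P ** P = P \<and>
     (\<exists>K \<alpha> X. K \<ge> 1 \<and> \<alpha> > 0 \<and> fundamental_matrix A X \<and>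
        (\<forall>t t0. 0 \<le> t0 \<and> t0 \<le> t \<longrightarrow>
            norm (X t ** P ** matrix_inv (X t0)) \<le> K * exp (- \<alpha> * (t - t0))) \<and>
        (\<forall>t t0. 0 \<le> t \<and> t \<le> t0 \<longrightarrow>
            norm (X t ** (mat 1 - P) ** matrix_inv (X t0)) \<le> K * exp (\<alpha> * (t - t0))))"
  unfolding exp_dichotomy_def fundamental_matrix_def ..

lemma has_vector_derivative_fundamental_matrix_inv:
  assumes "fundamental_matrix A X" and "t \<ge> 0"
  shows "((\<lambda>t. matrix_inv (X t)) has_vector_derivative - (matrix_inv (X t) ** A t)) (at t within {0..})"
proof -
  have "((\<lambda>t. matrix_inv (X t)) has_vector_derivative
      - (matrix_inv (X t) ** (A t ** X t) ** matrix_inv (X t))) (at t within {0..})"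
    using assms unfolding fundamental_matrix_def
    by (intro has_vector_derivative_matrix_inv) auto
  moreover have "matrix_inv (X t) ** (A t ** X t) ** matrix_inv (X t) = matrix_inv (X t) ** A t"
    using assms unfolding fundamental_matrix_def
    by (metis matrix_inv_right matrix_mul_assoc matrix_mul_rid)
  ultimately show ?thesis
    by simp
qed

lemma add_exp_decay_le:
  fixes d :: real
  assumes "0 \<le> d" "0 \<le> K1" "0 \<le> K2"
  shows "K1 * exp (- \<alpha>1 * d) + K2 * exp (- \<alpha>2 * d) \<le> (K1 + K2) * exp (- min \<alpha>1 \<alpha>2 * d)"
proof -
  have "exp (- \<alpha>1 * d) \<le> exp (- min \<alpha>1 \<alpha>2 * d)" "exp (- \<alpha>2 * d) \<le> exp (- min \<alpha>1 \<alpha>2 * d)"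
    using assms(1) by (simp_all add: mult_right_mono)
  with assms(2,3) show ?thesis
    by (simp add: distrib_right add_mono mult_left_mono)
qed

lemma exp_dichotomy_block_diag:
  fixes A1 :: "real \<Rightarrow> real^'a::finite^'a" and A2 :: "real \<Rightarrow> real^'b::finite^'b"
  assumes "exp_dichotomy A1 P1" and "exp_dichotomy A2 P2"
  shows "exp_dichotomy (\<lambda>t. block_mat (A1 t) 0 (A2 t)) (block_mat P1 0 P2)"
proof -
  obtain K1 \<alpha>1 X1 where P1: "P1 ** P1 = P1" and K1: "K1 \<ge> 1" "\<alpha>1 > 0"
    and X1: "fundamental_matrix A1 X1"
    and stable1: "\<And>t t0. 0 \<le> t0 \<Longrightarrow> t0 \<le> t \<Longrightarrow>
      norm (X1 t ** P1 ** matrix_inv (X1 t0)) \<le> K1 * exp (- \<alpha>1 * (t - t0))"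
    and unstable1: "\<And>t t0. 0 \<le> t \<Longrightarrow> t \<le> t0 \<Longrightarrow>
      norm (X1 t ** (mat 1 - P1) ** matrix_inv (X1 t0)) \<le> K1 * exp (\<alpha>1 * (t - t0))"
    using assms(1) unfolding exp_dichotomy_iff by blast
  obtain K2 \<alpha>2 X2 where P2: "P2 ** P2 = P2" and K2: "K2 \<ge> 1" "\<alpha>2 > 0"
    and X2: "fundamental_matrix A2 X2"
    and stable2: "\<And>t t0. 0 \<le> t0 \<Longrightarrow> t0 \<le> t \<Longrightarrow>
      norm (X2 t ** P2 ** matrix_inv (X2 t0)) \<le> K2 * exp (- \<alpha>2 * (t - t0))"
    and unstable2: "\<And>t t0. 0 \<le> t \<Longrightarrow> t \<le> t0 \<Longrightarrow>
      norm (X2 t ** (mat 1 - P2) ** matrix_inv (X2 t0)) \<le> K2 * exp (\<alpha>2 * (t - t0))"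
    using assms(2) unfolding exp_dichotomy_iff by blast
  define X where "X t = block_mat (X1 t) 0 (X2 t)" for t
  have X_inv: "invertible (X t)" "matrix_inv (X t) = block_mat (matrix_inv (X1 t)) 0 (matrix_inv (X2 t))"
    if "t \<ge> 0" for t
  proof -
    have "X t ** block_mat (matrix_inv (X1 t)) 0 (matrix_inv (X2 t)) = mat 1"
      using X1 X2 that by (simp add: X_def fundamental_matrix_def matrix_inv_right mat_1_eq_block_mat)
    then show "invertible (X t)" "matrix_inv (X t) = block_mat (matrix_inv (X1 t)) 0 (matrix_inv (X2 t))"
      by (rule matrix_inv_unique)+
  qed
  have block_bound: "norm (X t ** block_mat Q1 0 Q2 ** matrix_inv (X t0))
      \<le> norm (X1 t ** Q1 ** matrix_inv (X1 t0)) + norm (X2 t ** Q2 ** matrix_inv (X2 t0))"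
    if "t0 \<ge> 0" for t t0 Q1 Q2
    unfolding X_inv(2)[OF that] unfolding X_def
    by (simp add: matrix_mul_assoc) (rule order_trans[OF norm_block_mat_le], simp)
  have "fundamental_matrix (\<lambda>t. block_mat (A1 t) 0 (A2 t)) X"
    using X1 X2 X_inv unfolding fundamental_matrix_def X_def
    by (auto intro!: has_vector_derivative_block_mat)
  moreover have "norm (X t ** block_mat P1 0 P2 ** matrix_inv (X t0))
      \<le> (K1 + K2) * exp (- min \<alpha>1 \<alpha>2 * (t - t0))" if "0 \<le> t0" "t0 \<le> t" for t t0
  proof -
    have "norm (X t ** block_mat P1 0 P2 ** matrix_inv (X t0))
        \<le> K1 * exp (- \<alpha>1 * (t - t0)) + K2 * exp (- \<alpha>2 * (t - t0))"
      using block_bound[OF that(1), of t P1 P2] add_mono[OF stable1[OF that] stable2[OF that]] by linarith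
    also have "\<dots> \<le> (K1 + K2) * exp (- min \<alpha>1 \<alpha>2 * (t - t0))"
      using that K1 K2 by (intro add_exp_decay_le) auto
    finally show ?thesis .
  qed
  moreover have "norm (X t ** (mat 1 - block_mat P1 0 P2) ** matrix_inv (X t0))
      \<le> (K1 + K2) * exp (min \<alpha>1 \<alpha>2 * (t - t0))" if "0 \<le> t" "t \<le> t0" for t t0
  proof -
    have "norm (X t ** (mat 1 - block_mat P1 0 P2) ** matrix_inv (X t0))
        \<le> K1 * exp (- \<alpha>1 * (t0 - t)) + K2 * exp (- \<alpha>2 * (t0 - t))"
      using block_bound[of t0 t "mat 1 - P1" "mat 1 - P2"] that
        add_mono[OF unstable1[OF that] unstable2[OF that]]
      by (simp add: mat_1_eq_block_mat right_diff_distrib)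
    also have "\<dots> \<le> (K1 + K2) * exp (- min \<alpha>1 \<alpha>2 * (t0 - t))"
      using that K1 K2 by (intro add_exp_decay_le) auto
    finally show ?thesis
      by (simp add: right_diff_distrib)
  qed
  ultimately show ?thesis
    unfolding exp_dichotomy_iff using P1 P2 K1 K2
    by (intro conjI exI[of _ "K1 + K2"] exI[of _ "min \<alpha>1 \<alpha>2"] exI[of _ X]) auto
qed

lemma fundamental_matrix_lyapunov_transformation:
  assumes S: "lyapunov_transformation S S'"
    and D: "\<And>t. t \<ge> 0 \<Longrightarrow> transformed_coeff A S S' t = D t"
    and Z: "fundamental_matrix D Z"
  shows "fundamental_matrix A (\<lambda>t. S t ** Z t)"
  unfolding fundamental_matrix_def
proof (intro allI impI conjI)
  fix t :: real
  assume "t \<ge> 0"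
  then have S_deriv: "(S has_vector_derivative S' t) (at t within {0..})" and S_inv: "invertible (S t)"
    using S unfolding lyapunov_transformation_def by auto
  have "S t ** D t = S t ** (matrix_inv (S t) ** A t ** S t - matrix_inv (S t) ** S' t)"
    using D[OF \<open>t \<ge> 0\<close>] by (simp add: transformed_coeff_def)
  also have "\<dots> = A t ** S t - S' t"
    using S_inv by (simp add: matrix_mult_diff_right matrix_mul_assoc matrix_inv_right)
  finally have "S t ** (D t ** Z t) + S' t ** Z t = A t ** (S t ** Z t)"
    by (simp add: matrix_mul_assoc matrix_mult_distribs)
  moreover have "((\<lambda>t. S t ** Z t) has_vector_derivative S t ** (D t ** Z t) + S' t ** Z t) (at t within {0..})"
    using S_deriv Z \<open>t \<ge> 0\<close> unfolding fundamental_matrix_def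
    by (intro has_vector_derivative_matrix_mult) auto
  ultimately show "((\<lambda>t. S t ** Z t) has_vector_derivative A t ** (S t ** Z t)) (at t within {0..})"
    by simp
  show "invertible (S t ** Z t)"
    using S_inv Z \<open>t \<ge> 0\<close> unfolding fundamental_matrix_def by (auto intro: invertible_mult)
qed

lemma exp_dichotomy_lyapunov_transformation:
  assumes S: "lyapunov_transformation S S'"
    and D: "\<And>t. t \<ge> 0 \<Longrightarrow> transformed_coeff A S S' t = D t"
    and "exp_dichotomy D P"
  shows "exp_dichotomy A P"
proof -
  obtain K \<alpha> Z where P: "P ** P = P" and K: "K \<ge> 1" "\<alpha> > 0" and Z: "fundamental_matrix D Z"
    and stable: "\<And>t t0. 0 \<le> t0 \<Longrightarrow> t0 \<le> t \<Longrightarrow>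
      norm (Z t ** P ** matrix_inv (Z t0)) \<le> K * exp (- \<alpha> * (t - t0))"
    and unstable: "\<And>t t0. 0 \<le> t \<Longrightarrow> t \<le> t0 \<Longrightarrow>
      norm (Z t ** (mat 1 - P) ** matrix_inv (Z t0)) \<le> K * exp (\<alpha> * (t - t0))"
    using assms(3) unfolding exp_dichotomy_iff by blast
  obtain c where c: "c > 0" "\<And>t. t \<ge> 0 \<Longrightarrow> norm (S t) \<le> c"
    using S unfolding lyapunov_transformation_def bounded_pos by auto
  obtain c' where c': "c' > 0" "\<And>t. t \<ge> 0 \<Longrightarrow> norm (matrix_inv (S t)) \<le> c'"
    using S unfolding lyapunov_transformation_def bounded_pos by auto
  have transfer_bound: "norm (S t ** Z t ** Q ** matrix_inv (S t0 ** Z t0)) \<le> max 1 (c * c') * K * e"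
    if "t \<ge> 0" "t0 \<ge> 0" and bound: "norm (Z t ** Q ** matrix_inv (Z t0)) \<le> K * e" for t t0 Q e
  proof -
    have "0 \<le> K * e"
      using bound norm_ge_zero order_trans by blast
    have "matrix_inv (S t0 ** Z t0) = matrix_inv (Z t0) ** matrix_inv (S t0)"
      using S Z that(2) unfolding lyapunov_transformation_def fundamental_matrix_def
      by (intro matrix_inv_mult) auto
    then have "S t ** Z t ** Q ** matrix_inv (S t0 ** Z t0)
        = S t ** (Z t ** Q ** matrix_inv (Z t0)) ** matrix_inv (S t0)"
      by (simp add: matrix_mul_assoc)
    also have "norm \<dots> \<le> c * (K * e) * c'"
      using c c' that bound \<open>0 \<le> K * e\<close>
      by (intro order_trans[OF norm_matrix_mult3_le[of "S t" "Z t ** Q ** matrix_inv (Z t0)"]]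
          mult_mono) auto
    also have "\<dots> = (c * c') * (K * e)"
      by (simp add: mult_ac)
    also have "\<dots> \<le> max 1 (c * c') * (K * e)"
      using \<open>0 \<le> K * e\<close> by (intro mult_right_mono) auto
    finally show ?thesis
      by (simp add: mult.assoc)
  qed
  have "\<forall>t t0. 0 \<le> t0 \<and> t0 \<le> t \<longrightarrow> norm (S t ** Z t ** P ** matrix_inv (S t0 ** Z t0))
      \<le> max 1 (c * c') * K * exp (- \<alpha> * (t - t0))"
    by (intro allI impI transfer_bound stable; linarith)
  moreover have "\<forall>t t0. 0 \<le> t \<and> t \<le> t0 \<longrightarrow> norm (S t ** Z t ** (mat 1 - P) ** matrix_inv (S t0 ** Z t0))
      \<le> max 1 (c * c') * K * exp (\<alpha> * (t - t0))"
    by (intro allI impI transfer_bound unstable; linarith)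
  moreover have "1 \<le> max 1 (c * c') * K"
    using mult_mono[of 1 "max 1 (c * c')" 1 K] K(1) by simp
  ultimately show ?thesis
    unfolding exp_dichotomy_iff using P K(2) fundamental_matrix_lyapunov_transformation[OF S D Z]
    by blast
qed

section \<open>The Sylvester equation and block diagonalization\<close>

lemma has_vector_derivative_integral_atLeast:
  fixes f :: "real \<Rightarrow> 'a::banach"
  assumes cont: "continuous_on {a..} f" and int: "\<And>s. s \<ge> a \<Longrightarrow> f integrable_on {s..}"
    and "t \<ge> a"
  shows "((\<lambda>s. integral {s..} f) has_vector_derivative - f t) (at t within {a..})"
proof -
  have split: "integral {s..} f = integral {a..} f - integral {a..s} f" if "s \<ge> a" for s
  proof -
    have "(f has_integral (integral {a..s} f + integral {s..} f)) ({a..s} \<union> {s..})"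
      using int[OF that] integrable_continuous_interval[OF continuous_on_subset[OF cont]] that
      by (intro has_integral_Un) (auto simp: negligible_insert)
    moreover have "{a..s} \<union> {s..} = {a..}"
      using that by auto
    ultimately show ?thesis
      by (simp add: integral_unique)
  qed
  have "((\<lambda>s. integral {a..s} f) has_vector_derivative f t) (at t within {a..t + 1})"
    using \<open>t \<ge> a\<close> by (intro integral_has_vector_derivative continuous_on_subset[OF cont]) auto
  moreover have "at t within {a..t + 1} = at t within {a..}"
    by (rule at_within_nhd[where S = "{t - 1 <..< t + 1}"]) auto
  ultimately have "((\<lambda>s. integral {a..} f - integral {a..s} f) has_vector_derivative - f t)
      (at t within {a..})"
    by (intro derivative_eq_intros) auto
  then show ?thesis
    by (rule has_vector_derivative_transform[rotated 2]) (use \<open>t \<ge> a\<close> in \<open>auto intro: split\<close>)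
qed

lemma
  fixes f :: "real \<Rightarrow> 'a::banach"
  assumes cont: "continuous_on {a..} f" and "c > 0"
    and decay: "\<And>s. s \<ge> a \<Longrightarrow> norm (f s) \<le> C * exp (- c * (s - a))"
  shows integrable_on_atLeast_exp_decay: "f integrable_on {a..}"
    and norm_integral_atLeast_exp_decay: "norm (integral {a..} f) \<le> C / c"
proof -
  have g: "((\<lambda>s. C * exp (- c * (s - a))) has_integral C / c) {a..}"
    using has_integral_mult_right[OF has_integral_exp_minus_to_infinity[OF \<open>c > 0\<close>, of a],
        of "C * exp (c * a)"]
    by (simp add: exp_minus exp_diff field_simps)
  show int: "f integrable_on {a..}"
  proof (rule integrable_on_all_intervals_integrable_bound[where g = "\<lambda>s. C * exp (- c * (s - a))"])
    fix l u :: real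
    have "f integrable_on {max a l..u}"
      by (intro integrable_continuous_interval continuous_on_subset[OF cont]) auto
    moreover have "cbox l u \<inter> {a..} = {max a l..u}"
      by auto
    ultimately show "(\<lambda>s. if s \<in> {a..} then f s else 0) integrable_on cbox l u"
      unfolding integrable_restrict_Int by simp
  qed (use decay g in auto)
  show "norm (integral {a..} f) \<le> C / c"
    using integral_norm_bound_integral[OF int has_integral_integrable[OF g]] decay
      integral_unique[OF g] by simp
qed

lemma sylvester_variation_of_constants:
  fixes B11 :: "real \<Rightarrow> real^'a::finite^'a" and B12 :: "real \<Rightarrow> real^'b::finite^'a"
    and B22 :: "real \<Rightarrow> real^'b^'b"
  assumes X1: "fundamental_matrix B11 X1" and X2: "fundamental_matrix B22 X2" and "t \<ge> 0"
    and J: "(J has_vector_derivative - (matrix_inv (X1 t) ** B12 t ** X2 t)) (at t within {0..})"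
  defines "H \<equiv> \<lambda>t. - (X1 t ** J t ** matrix_inv (X2 t))"
  shows "(H has_vector_derivative B11 t ** H t + B12 t - H t ** B22 t) (at t within {0..})"
proof -
  have X1_inv: "X1 t ** matrix_inv (X1 t) = mat 1" and X2_inv: "X2 t ** matrix_inv (X2 t) = mat 1"
    using X1 X2 \<open>t \<ge> 0\<close> by (simp_all add: fundamental_matrix_def matrix_inv_right)
  have "((\<lambda>t. X1 t ** J t ** matrix_inv (X2 t)) has_vector_derivative
      X1 t ** J t ** - (matrix_inv (X2 t) ** B22 t)
      + (X1 t ** - (matrix_inv (X1 t) ** B12 t ** X2 t) + B11 t ** X1 t ** J t) ** matrix_inv (X2 t))
      (at t within {0..})"
    using X1 X2 \<open>t \<ge> 0\<close> unfolding fundamental_matrix_def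
    by (intro has_vector_derivative_matrix_mult J
        has_vector_derivative_fundamental_matrix_inv[OF X2]) auto
  moreover have "- (X1 t ** J t ** - (matrix_inv (X2 t) ** B22 t)
      + (X1 t ** - (matrix_inv (X1 t) ** B12 t ** X2 t) + B11 t ** X1 t ** J t) ** matrix_inv (X2 t))
      = B11 t ** H t + B12 t - H t ** B22 t"
    unfolding H_def
    by (simp add: matrix_mult_distribs matrix_mul_assoc X1_inv)
      (simp add: X2_inv flip: matrix_mul_assoc)
  ultimately show ?thesis
    unfolding H_def using has_vector_derivative_minus by fastforce
qed

lemma sylvester_kernel_integral:
  fixes X1 :: "real \<Rightarrow> real^'a::finite^'a" and B12 :: "real \<Rightarrow> real^'b::finite^'a"
    and X2 :: "real \<Rightarrow> real^'b^'b"
  assumes X1: "\<And>s. s \<ge> 0 \<Longrightarrow> invertible (X1 s)" and X2: "\<And>s. s \<ge> 0 \<Longrightarrow> invertible (X2 s)"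
    and G_cont: "continuous_on {0..} G" and G_def: "\<And>s. G s = matrix_inv (X1 s) ** B12 s ** X2 s"
    and M: "\<And>s. s \<ge> 0 \<Longrightarrow> norm (B12 s) \<le> M"
    and unstable: "\<And>t s. 0 \<le> t \<Longrightarrow> t \<le> s \<Longrightarrow>
      norm (X1 t ** matrix_inv (X1 s)) \<le> K1 * exp (\<alpha>1 * (t - s))"
    and stable: "\<And>t s. 0 \<le> t \<Longrightarrow> t \<le> s \<Longrightarrow>
      norm (X2 s ** matrix_inv (X2 t)) \<le> K2 * exp (- \<alpha>2 * (s - t))"
    and "K1 \<ge> 0" and "\<alpha>1 + \<alpha>2 > 0" and "t \<ge> 0"
  shows "G integrable_on {t..}"
    and "norm (X1 t ** integral {t..} G ** matrix_inv (X2 t)) \<le> K1 * K2 * M / (\<alpha>1 + \<alpha>2)"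
proof -
  define F where "F s = X1 t ** G s ** matrix_inv (X2 t)" for s
  have F_cont: "continuous_on {t..} F"
    unfolding F_def using \<open>t \<ge> 0\<close>
    by (intro continuous_on_matrix_mult continuous_on_const continuous_on_subset[OF G_cont]) auto
  have F_decay: "norm (F s) \<le> K1 * K2 * M * exp (- (\<alpha>1 + \<alpha>2) * (s - t))" if "s \<ge> t" for s
  proof -
    have "F s = (X1 t ** matrix_inv (X1 s)) ** B12 s ** (X2 s ** matrix_inv (X2 t))"
      by (simp add: F_def G_def matrix_mul_assoc)
    also have "norm \<dots> \<le> (K1 * exp (\<alpha>1 * (t - s))) * M * (K2 * exp (- \<alpha>2 * (s - t)))"
      using unstable[OF \<open>t \<ge> 0\<close> that] stable[OF \<open>t \<ge> 0\<close> that] M \<open>K1 \<ge> 0\<close> \<open>t \<ge> 0\<close> that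
        order_trans[OF norm_ge_zero M[OF \<open>t \<ge> 0\<close>]]
      by (intro order_trans[OF norm_matrix_mult3_le] mult_mono) auto
    also have "\<dots> = K1 * K2 * M * exp (- (\<alpha>1 + \<alpha>2) * (s - t))"
      by (simp add: algebra_simps flip: exp_add)
    finally show ?thesis .
  qed
  have F_int: "F integrable_on {t..}"
    using F_cont \<open>\<alpha>1 + \<alpha>2 > 0\<close> F_decay by (rule integrable_on_atLeast_exp_decay)
  have conj_linear: "bounded_linear (\<lambda>N. U ** N ** V)" for U :: "real^'q^'p" and V :: "real^'s^'r"
    by (rule bounded_linear_compose[OF bounded_bilinear.bounded_linear_left[OF bounded_bilinear_matrix_mult]
          bounded_bilinear.bounded_linear_right[OF bounded_bilinear_matrix_mult]])
  have "G = (\<lambda>s. matrix_inv (X1 t) ** F s ** X2 t)"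
    using X1[OF \<open>t \<ge> 0\<close>] X2[OF \<open>t \<ge> 0\<close>]
    by (intro ext) (simp add: F_def matrix_mul_assoc matrix_inv_left,
        metis matrix_inv_left matrix_mul_assoc matrix_mul_rid)
  then show G_int: "G integrable_on {t..}"
    using integrable_linear[OF F_int conj_linear] by (simp add: comp_def)
  have "X1 t ** integral {t..} G ** matrix_inv (X2 t) = integral {t..} F"
    by (simp add: F_def[abs_def] integral_linear[OF G_int conj_linear, unfolded comp_def])
  also have "norm \<dots> \<le> K1 * K2 * M / (\<alpha>1 + \<alpha>2)"
    using F_cont \<open>\<alpha>1 + \<alpha>2 > 0\<close> F_decay by (rule norm_integral_atLeast_exp_decay)
  finally show "norm (X1 t ** integral {t..} G ** matrix_inv (X2 t)) \<le> K1 * K2 * M / (\<alpha>1 + \<alpha>2)" .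
qed

lemma exp_dichotomy_bounded_sylvester_solution:
  fixes B11 :: "real \<Rightarrow> real^'a::finite^'a" and B12 :: "real \<Rightarrow> real^'b::finite^'a"
    and B22 :: "real \<Rightarrow> real^'b^'b"
  assumes "exp_dichotomy B11 0" and "exp_dichotomy B22 (mat 1)"
    and B12_cont: "continuous_on {0..} B12" and "bounded (B12 ` {0..})"
  obtains H where "\<And>t. t \<ge> 0 \<Longrightarrow>
      (H has_vector_derivative B11 t ** H t + B12 t - H t ** B22 t) (at t within {0..})"
    and "bounded (H ` {0..})"
proof -
  obtain K1 \<alpha>1 X1 where K1: "K1 \<ge> 1" "\<alpha>1 > 0" and X1: "fundamental_matrix B11 X1"
    and unstable: "\<And>t t0. 0 \<le> t \<Longrightarrow> t \<le> t0 \<Longrightarrow>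
      norm (X1 t ** matrix_inv (X1 t0)) \<le> K1 * exp (\<alpha>1 * (t - t0))"
    using assms(1) unfolding exp_dichotomy_iff by auto
  obtain K2 \<alpha>2 X2 where K2: "K2 \<ge> 1" "\<alpha>2 > 0" and X2: "fundamental_matrix B22 X2"
    and stable: "\<And>t t0. 0 \<le> t0 \<Longrightarrow> t0 \<le> t \<Longrightarrow>
      norm (X2 t ** matrix_inv (X2 t0)) \<le> K2 * exp (- \<alpha>2 * (t - t0))"
    using assms(2) unfolding exp_dichotomy_iff by auto
  obtain M where M: "\<And>t. t \<ge> 0 \<Longrightarrow> norm (B12 t) \<le> M"
    using assms(4) unfolding bounded_iff by auto
  define G where "G s = matrix_inv (X1 s) ** B12 s ** X2 s" for s
  have "continuous_on {0..} X2" "continuous_on {0..} (\<lambda>s. matrix_inv (X1 s))"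
    using X2 has_vector_derivative_fundamental_matrix_inv[OF X1] unfolding fundamental_matrix_def
    by (auto intro!: continuous_on_vector_derivative)
  then have G_cont: "continuous_on {0..} G"
    unfolding G_def by (intro continuous_on_matrix_mult B12_cont)
  note kernel = sylvester_kernel_integral[OF _ _ G_cont G_def M unstable stable]
  define H where "H t = - (X1 t ** integral {t..} G ** matrix_inv (X2 t))" for t
  have "(H has_vector_derivative B11 t ** H t + B12 t - H t ** B22 t) (at t within {0..})"
    if "t \<ge> 0" for t
  proof -
    have "((\<lambda>t. integral {t..} G) has_vector_derivative - G t) (at t within {0..})"
      using G_cont kernel(1) X1 X2 K1 K2 that unfolding fundamental_matrix_def
      by (intro has_vector_derivative_integral_atLeast) auto
    then show ?thesis
      unfolding H_def[abs_def] G_def using sylvester_variation_of_constants[OF X1 X2 that] by blast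
  qed
  moreover have "norm (H t) \<le> K1 * K2 * M / (\<alpha>1 + \<alpha>2)" if "t \<ge> 0" for t
    using kernel(2) X1 X2 K1 K2 that unfolding fundamental_matrix_def H_def norm_minus_cancel by auto
  then have "bounded (H ` {0..})"
    unfolding bounded_iff by auto
  ultimately show ?thesis
    using that by blast
qed

lemma lyapunov_transformation_unit_upper_block:
  fixes H :: "real \<Rightarrow> real^'b::finite^'a::finite"
  assumes "\<And>t. t \<ge> 0 \<Longrightarrow> (H has_vector_derivative H' t) (at t within {0..})"
    and "continuous_on {0..} H'" and "bounded (H ` {0..})" and "bounded (H' ` {0..})"
  shows "lyapunov_transformation (\<lambda>t. block_mat (mat 1) (H t) (mat 1)) (\<lambda>t. block_mat 0 (H' t) 0)"
proof -
  obtain h h' where h: "\<And>t. t \<ge> 0 \<Longrightarrow> norm (H t) \<le> h" and h': "\<And>t. t \<ge> 0 \<Longrightarrow> norm (H' t) \<le> h'"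
    using assms(3,4) unfolding bounded_iff by auto
  have block_bounded: "bounded ((\<lambda>t. block_mat A (F t) C) ` {0..})"
    if "\<And>t. t \<ge> 0 \<Longrightarrow> norm (F t) \<le> b"
    for A :: "real^'a^'a" and C :: "real^'b^'b" and F :: "real \<Rightarrow> real^'b^'a" and b
  proof -
    have "norm (block_mat A (F t) C) \<le> norm A + b + norm C" if "t \<ge> 0" for t
      using that \<open>\<And>t. t \<ge> 0 \<Longrightarrow> norm (F t) \<le> b\<close>
      by (intro order_trans[OF norm_block_mat_le] add_mono) auto
    then show ?thesis
      unfolding bounded_iff by blast
  qed
  show ?thesis
    unfolding lyapunov_transformation_def matrix_inv_unit_upper_block
    using assms(1,2) h h'
    by (auto intro!: has_vector_derivative_block_mat continuous_on_block_mat block_bounded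
        invertible_unit_upper_block)
qed

lemma transformed_coeff_unit_upper_block:
  fixes B11 :: "real \<Rightarrow> real^'a::finite^'a" and B12 :: "real \<Rightarrow> real^'b::finite^'a"
    and B22 :: "real \<Rightarrow> real^'b^'b"
  shows "transformed_coeff (\<lambda>t. block_mat (B11 t) (B12 t) (B22 t))
      (\<lambda>t. block_mat (mat 1) (H t) (mat 1)) (\<lambda>t. block_mat 0 (H' t) 0) t
    = block_mat (B11 t) (B11 t ** H t + B12 t - H t ** B22 t - H' t) (B22 t)"
  by (simp add: transformed_coeff_def matrix_inv_unit_upper_block block_mat_eq_iff
      matrix_mult_distribs matrix_mul_assoc)

lemma lyapunov_transformation_sylvester:
  fixes B11 :: "real \<Rightarrow> real^'a::finite^'a" and B12 :: "real \<Rightarrow> real^'b::finite^'a"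
    and B22 :: "real \<Rightarrow> real^'b^'b"
  assumes "continuous_on {0..} B11" and "continuous_on {0..} B12" and "continuous_on {0..} B22"
    and "bounded (B11 ` {0..})" and "bounded (B12 ` {0..})" and "bounded (B22 ` {0..})"
    and H: "\<And>t. t \<ge> 0 \<Longrightarrow>
      (H has_vector_derivative B11 t ** H t + B12 t - H t ** B22 t) (at t within {0..})"
    and "bounded (H ` {0..})"
  shows "lyapunov_transformation (\<lambda>t. block_mat (mat 1) (H t) (mat 1))
    (\<lambda>t. block_mat 0 (B11 t ** H t + B12 t - H t ** B22 t) 0)"
proof (rule lyapunov_transformation_unit_upper_block[OF H])
  have "continuous_on {0..} H"
    using H by (auto intro!: continuous_on_vector_derivative)
  then show "continuous_on {0..} (\<lambda>t. B11 t ** H t + B12 t - H t ** B22 t)"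
    using assms(1-3) by (intro continuous_intros continuous_on_matrix_mult)
  show "bounded ((\<lambda>t. B11 t ** H t + B12 t - H t ** B22 t) ` {0..})"
    using assms(4-6,8) by (intro bounded_plus_comp bounded_minus_comp bounded_matrix_mult_comp)
qed (use assms in auto)

theorem proposition3:
  fixes B11 :: "real \<Rightarrow> real^'a::finite^'a"
    and B12 :: "real \<Rightarrow> real^'b::finite^'a"
    and B22 :: "real \<Rightarrow> real^'b^'b"
  assumes "continuous_on {0..} B11" and "continuous_on {0..} B12" and "continuous_on {0..} B22"
    and "bounded (B11 ` {0..})" and "bounded (B12 ` {0..})" and "bounded (B22 ` {0..})"
    and "exp_dichotomy B11 0"
    and "exp_dichotomy B22 (mat 1)"
  shows "exp_dichotomy (\<lambda>t. block_mat (B11 t) (B12 t) (B22 t)) (block_mat 0 0 (mat 1))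
     \<and> (\<exists>S S' D2. lyapunov_transformation S S' \<and>
          (\<forall>t\<ge>0. transformed_coeff (\<lambda>t. block_mat (B11 t) (B12 t) (B22 t)) S S' t
                   = block_mat (B11 t) 0 (D2 t)))"
proof -
  obtain H where H: "\<And>t. t \<ge> 0 \<Longrightarrow>
      (H has_vector_derivative B11 t ** H t + B12 t - H t ** B22 t) (at t within {0..})"
    and "bounded (H ` {0..})"
    using exp_dichotomy_bounded_sylvester_solution assms(7,8,2,5) by blast
  define S where "S t = block_mat (mat 1) (H t) (mat 1)" for t
  define S' where "S' t = block_mat 0 (B11 t ** H t + B12 t - H t ** B22 t) 0" for t
  have lyapunov: "lyapunov_transformation S S'"
    unfolding S_def[abs_def] S'_def[abs_def]
    using assms(1-6) H \<open>bounded (H ` {0..})\<close> by (rule lyapunov_transformation_sylvester)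
  have block_diagonal: "transformed_coeff (\<lambda>t. block_mat (B11 t) (B12 t) (B22 t)) S S' t
      = block_mat (B11 t) 0 (B22 t)" for t
    unfolding S_def[abs_def] S'_def[abs_def] by (simp add: transformed_coeff_unit_upper_block)
  have "exp_dichotomy (\<lambda>t. block_mat (B11 t) 0 (B22 t)) (block_mat 0 0 (mat 1))"
    using assms(7,8) by (rule exp_dichotomy_block_diag)
  with lyapunov block_diagonal
  have "exp_dichotomy (\<lambda>t. block_mat (B11 t) (B12 t) (B22 t)) (block_mat 0 0 (mat 1))"
    by (rule exp_dichotomy_lyapunov_transformation)
  with lyapunov block_diagonal show ?thesis
    by blast
qed

end
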